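(* There exists no undirected graph $G=(V,E)$ for which there is a set $B=\{((u_i,v_i),x_i): 1\le i\le4\}\subseteq\mathcal{D}\times[0,1]$ that is shattered by $\mathcal{F}^+=\{R_w: w\in V\}$ and such that there are at least three distinct indices $j',j'',j'''\in\{1,2,3,4\}$ with $\sigma_{u_{j'}v_{j'}}=\sigma_{u_{j''}v_{j''}}=\sigma_{u_{j'''}v_{j'''}}=1$.
   Context: $\mathcal{D}=\{(u,v)\in V\times V: u\ne v\}$. $\sigma_{uv}$ is the number of shortest paths from $u$ to $v$, $\sigma_{uv}(w)$ the number of those to which $w$ is internal ($w\ne u,v$, path through $w$); $f_w(u,v)=\sigma_{uv}(w)/\sigma_{uv}$ ($0$ if $\sigma_{uv}=0$). For $w\in V$, $R_w=\{((u,v),x)\in\mathcal{D}\times[0,1]: x\le f_w(u,v)\}$. A set $B$ is shattered by $\mathcal{F}^+$ if $\{R\cap B: R\in\mathcal{F}^+\}$ equals the power set of $B$. *)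

theory Defs
  imports Complex_Main
begin

definition ugraph :: "'a set \<Rightarrow> ('a \<times> 'a) set \<Rightarrow> bool" where
  "ugraph V E \<longleftrightarrow> finite V \<and> E \<subseteq> V \<times> V \<and> sym E \<and> irrefl E"

definition is_path :: "'a set \<Rightarrow> ('a \<times> 'a) set \<Rightarrow> 'a list \<Rightarrow> 'a \<Rightarrow> 'a \<Rightarrow> bool" where
  "is_path V E p u v \<longleftrightarrow> p \<noteq> [] \<and> hd p = u \<and> last p = v \<and> set p \<subseteq> V \<and>
     (\<forall>i. Suc i < length p \<longrightarrow> (p ! i, p ! Suc i) \<in> E)"

definition shortest_paths :: "'a set \<Rightarrow> ('a \<times> 'a) set \<Rightarrow> 'a \<Rightarrow> 'a \<Rightarrow> 'a list set" where
  "shortest_paths V E u v = {p. is_path V E p u v \<and>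
     (\<forall>q. is_path V E q u v \<longrightarrow> length p \<le> length q)}"

definition sigma :: "'a set \<Rightarrow> ('a \<times> 'a) set \<Rightarrow> 'a \<Rightarrow> 'a \<Rightarrow> nat" where
  "sigma V E u v = card (shortest_paths V E u v)"

definition sigma_via :: "'a set \<Rightarrow> ('a \<times> 'a) set \<Rightarrow> 'a \<Rightarrow> 'a \<Rightarrow> 'a \<Rightarrow> nat" where
  "sigma_via V E u v w = card {p \<in> shortest_paths V E u v. w \<in> set p \<and> w \<noteq> u \<and> w \<noteq> v}"

definition fw :: "'a set \<Rightarrow> ('a \<times> 'a) set \<Rightarrow> 'a \<Rightarrow> 'a \<Rightarrow> 'a \<Rightarrow> real" where
  "fw V E w u v = (if sigma V E u v = 0 then 0
                   else real (sigma_via V E u v w) / real (sigma V E u v))"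

definition Dset :: "'a set \<Rightarrow> ('a \<times> 'a) set" where
  "Dset V = {(u, v) \<in> V \<times> V. u \<noteq> v}"

definition Rw :: "'a set \<Rightarrow> ('a \<times> 'a) set \<Rightarrow> 'a \<Rightarrow> (('a \<times> 'a) \<times> real) set" where
  "Rw V E w = {((u, v), x). (u, v) \<in> Dset V \<and> x \<in> {0..1} \<and> x \<le> fw V E w u v}"

definition shattered :: "'b set set \<Rightarrow> 'b set \<Rightarrow> bool" where
  "shattered F B \<longleftrightarrow> (\<lambda>R. R \<inter> B) ` F = Pow B"

end

theory Submission
  imports Defs
begin

text \<open>
  If \<open>\<sigma>\<^sub>u\<^sub>v = 1\<close> and some vertex covers no point of \<open>B\<close>, then \<open>((u, v), x) \<in> B\<close> has
  \<open>x > 0\<close>, so it lies in \<open>R\<^sub>w\<close> exactly when \<open>w\<close> is an interior vertex of the unique shortest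
  \<open>u\<close>-\<open>v\<close> path. Shattering therefore yields three unique shortest paths \<open>P\<^sub>1, P\<^sub>2, P\<^sub>3\<close>, two
  distinct vertices \<open>a, a'\<close> interior to all of them (\<open>a'\<close> also covers the fourth point) and
  vertices \<open>b, c, d\<close> interior to exactly \<open>P\<^sub>1, P\<^sub>2\<close>, resp. \<open>P\<^sub>1, P\<^sub>3\<close>, resp. \<open>P\<^sub>2, P\<^sub>3\<close>.

  On a unique shortest path, any vertex metrically between two interior vertices is itself
  interior; so \<open>d\<close> is not between any two of \<open>a, a', b, c\<close>, and symmetrically for \<open>b\<close> and \<open>c\<close>.
  Along the geodesic \<open>P\<^sub>1\<close> this forces \<open>b\<close> and \<open>c\<close> to opposite ends of \<open>{a, a'}\<close>, i.e.
  \<open>s(b) = -s(c) \<noteq> 0\<close> for \<open>s(y) = dist(y, a) - dist(y, a')\<close>. Likewise \<open>s(b) = -s(d)\<close> and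
  \<open>s(c) = -s(d)\<close>, whence \<open>s(c) = 0\<close>: a contradiction.
\<close>

section \<open>Paths\<close>

lemma is_path_iff_successively:
  "is_path V E p u v \<longleftrightarrow>
     p \<noteq> [] \<and> hd p = u \<and> last p = v \<and> set p \<subseteq> V \<and> successively (\<lambda>x y. (x, y) \<in> E) p"
  unfolding is_path_def successively_conv_nth by simp

lemma is_path_append:
  assumes "is_path V E p x y" "is_path V E q y z"
  shows "is_path V E (p @ tl q) x z"
  using assms unfolding is_path_iff_successively
  by (cases q; cases "tl q") (auto simp: successively_append_iff successively_Cons)

lemma is_path_take:
  assumes "is_path V E p u v" "i < length p"
  shows "is_path V E (take (Suc i) p) u (p ! i)"
proof -
  have "successively (\<lambda>x y. (x, y) \<in> E) (take (Suc i) p)"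
    using assms(1) unfolding is_path_iff_successively
    by (metis append_take_drop_id successively_append_iff)
  moreover have "last (take (Suc i) p) = p ! i"
    using assms(2) by (simp add: take_Suc_conv_app_nth)
  ultimately show ?thesis
    using assms(1) set_take_subset[of "Suc i" p] unfolding is_path_iff_successively by auto
qed

lemma is_path_drop:
  assumes "is_path V E p u v" "i < length p"
  shows "is_path V E (drop i p) (p ! i) v"
proof -
  have "successively (\<lambda>x y. (x, y) \<in> E) (drop i p)"
    using assms(1) unfolding is_path_iff_successively
    by (metis append_take_drop_id successively_append_iff)
  then show ?thesis
    using assms set_drop_subset[of i p] unfolding is_path_iff_successively
    by (auto simp: hd_drop_conv_nth)
qed

lemma is_path_segment:
  assumes "is_path V E p u v" "i \<le> j" "j < length p"
  shows "is_path V E (take (Suc (j - i)) (drop i p)) (p ! i) (p ! j)"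
  using is_path_take[OF is_path_drop[OF assms(1)], of i "j - i"] assms(2,3) by simp

lemma is_path_rev:
  assumes "sym E" "is_path V E p u v"
  shows "is_path V E (rev p) v u"
  using assms unfolding is_path_iff_successively
  by (auto simp: hd_rev last_rev elim!: successively_mono dest: symD)

lemma is_path_splice:
  assumes "is_path V E p u v" "i \<le> j" "j < length p" "is_path V E q (p ! i) (p ! j)"
  shows "is_path V E (take i p @ q @ drop (Suc j) p) u v"
proof -
  have "is_path V E (take (Suc i) p @ tl (q @ tl (drop j p))) u v"
    using assms by (intro is_path_append[OF is_path_take] is_path_append[OF _ is_path_drop]) auto
  moreover have "take (Suc i) p @ tl (q @ tl (drop j p)) = take i p @ q @ drop (Suc j) p"
    using assms(2-4) unfolding is_path_def
    by (cases q) (auto simp: take_Suc_conv_app_nth Cons_nth_drop_Suc[symmetric])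
  ultimately show ?thesis by simp
qed

section \<open>Reachability and graph distance\<close>

definition reachable :: "'a set \<Rightarrow> ('a \<times> 'a) set \<Rightarrow> 'a \<Rightarrow> 'a \<Rightarrow> bool" where
  "reachable V E x y \<longleftrightarrow> (\<exists>p. is_path V E p x y)"

lemma reachable_trans: "reachable V E x y \<Longrightarrow> reachable V E y z \<Longrightarrow> reachable V E x z"
  unfolding reachable_def by (meson is_path_append)

lemma reachable_sym: "sym E \<Longrightarrow> reachable V E x y \<Longrightarrow> reachable V E y x"
  unfolding reachable_def by (meson is_path_rev)

lemma reachable_on_path:
  assumes "sym E" "is_path V E p u v" "x \<in> set p" "y \<in> set p"
  shows "reachable V E x y"
proof -
  have from_start: "reachable V E u (p ! k)" if "k < length p" for k
    using is_path_take[OF assms(2) that] unfolding reachable_def by blast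
  obtain i j where "i < length p" "j < length p" "x = p ! i" "y = p ! j"
    using assms(3,4) by (auto simp: in_set_conv_nth)
  then show ?thesis
    using reachable_trans[OF reachable_sym[OF assms(1) from_start] from_start] by simp
qed

text \<open>When \<open>y\<close> is unreachable from \<open>x\<close> the \<open>LEAST\<close> ranges over an empty predicate and the
  value is unspecified; hence the reachability hypotheses below.\<close>
definition graph_dist :: "'a set \<Rightarrow> ('a \<times> 'a) set \<Rightarrow> 'a \<Rightarrow> 'a \<Rightarrow> nat" where
  "graph_dist V E x y = (LEAST n. \<exists>p. is_path V E p x y \<and> length p = Suc n)"

lemma graph_dist_less_length:
  assumes "is_path V E p x y"
  shows "graph_dist V E x y < length p"
proof -
  have "length p = Suc (length p - 1)"
    using assms unfolding is_path_def by simp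
  then have "graph_dist V E x y \<le> length p - 1"
    unfolding graph_dist_def using assms by (intro Least_le) metis
  then show ?thesis
    using \<open>length p = Suc (length p - 1)\<close> by linarith
qed

lemma graph_dist_attained:
  "reachable V E x y \<Longrightarrow> \<exists>p. is_path V E p x y \<and> length p = Suc (graph_dist V E x y)"
  unfolding graph_dist_def reachable_def is_path_def
  by (rule LeastI_ex) (metis length_greater_0_conv Suc_pred)

lemma graph_dist_sym:
  assumes "sym E"
  shows "graph_dist V E x y = graph_dist V E y x"
proof -
  have "(\<exists>p. is_path V E p x y \<and> length p = n) \<longleftrightarrow> (\<exists>p. is_path V E p y x \<and> length p = n)" for n
    using is_path_rev[OF assms] length_rev by metis
  then show ?thesis
    unfolding graph_dist_def by simp
qed

definition between :: "'a set \<Rightarrow> ('a \<times> 'a) set \<Rightarrow> 'a \<Rightarrow> 'a \<Rightarrow> 'a \<Rightarrow> bool" where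
  "between V E x z y \<longleftrightarrow> graph_dist V E x z + graph_dist V E z y = graph_dist V E x y"

lemma between_sym: "sym E \<Longrightarrow> between V E x z y \<longleftrightarrow> between V E y z x"
  unfolding between_def by (simp add: graph_dist_sym add.commute)

section \<open>Unique shortest paths\<close>

lemma shortest_pathsD:
  assumes "p \<in> shortest_paths V E u v"
  shows "is_path V E p u v" "is_path V E q u v \<Longrightarrow> length p \<le> length q"
  using assms unfolding shortest_paths_def by auto

lemma graph_dist_shortest_path:
  assumes "p \<in> shortest_paths V E u v" "i \<le> j" "j < length p"
  shows "graph_dist V E (p ! i) (p ! j) = j - i"
proof -
  have path: "is_path V E p u v" using shortest_pathsD(1)[OF assms(1)] .
  have seg: "is_path V E (take (Suc (j - i)) (drop i p)) (p ! i) (p ! j)"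
    using is_path_segment[OF path assms(2,3)] .
  then obtain q where q: "is_path V E q (p ! i) (p ! j)" "length q = Suc (graph_dist V E (p ! i) (p ! j))"
    using graph_dist_attained reachable_def by metis
  have "length p \<le> length (take i p @ q @ drop (Suc j) p)"
    using shortest_pathsD(2)[OF assms(1) is_path_splice[OF path assms(2,3) q(1)]] .
  then have "j - i \<le> graph_dist V E (p ! i) (p ! j)"
    using q(2) assms(2,3) by simp
  moreover have "graph_dist V E (p ! i) (p ! j) \<le> j - i"
    using graph_dist_less_length[OF seg] assms(2,3) by simp
  ultimately show ?thesis by linarith
qed

lemma int_graph_dist_shortest_path:
  assumes "sym E" "p \<in> shortest_paths V E u v" "i < length p" "j < length p"
  shows "int (graph_dist V E (p ! i) (p ! j)) = \<bar>int i - int j\<bar>"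
  using graph_dist_shortest_path[OF assms(2), of i j] graph_dist_shortest_path[OF assms(2), of j i]
    graph_dist_sym[OF assms(1)] assms(3,4)
  by (cases "i \<le> j") auto

lemma shortest_path_distinct:
  assumes "p \<in> shortest_paths V E u v"
  shows "distinct p"
proof -
  have neq: "p ! i \<noteq> p ! j" if ij: "i < j" "j < length p" for i j
  proof
    assume eq: "p ! i = p ! j"
    have "p ! i \<in> V"
      using shortest_pathsD(1)[OF assms] ij unfolding is_path_def by auto
    then have "graph_dist V E (p ! i) (p ! i) = 0"
      using graph_dist_less_length[of V E "[p ! i]"] unfolding is_path_def by simp
    moreover have "graph_dist V E (p ! i) (p ! j) = j - i"
      using graph_dist_shortest_path[OF assms] ij by simp
    ultimately show False
      using eq ij by simp
  qed
  show ?thesis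
    unfolding distinct_conv_nth
  proof (intro allI impI)
    fix i j assume "i < length p" "j < length p" "i \<noteq> j"
    then show "p ! i \<noteq> p ! j"
      using neq[of i j] neq[of j i] by (cases "i < j") auto
  qed
qed

lemma unique_shortest_path_segment:
  assumes "shortest_paths V E u v = {p}" "i \<le> j" "j < length p"
    "is_path V E q (p ! i) (p ! j)" "length q = Suc (j - i)"
  shows "q = take (Suc (j - i)) (drop i p)"
proof -
  have p: "p \<in> shortest_paths V E u v" using assms(1) by blast
  define r where "r = take i p @ q @ drop (Suc j) p"
  have "is_path V E r u v"
    unfolding r_def using is_path_splice[OF shortest_pathsD(1)[OF p] assms(2-4)] .
  moreover have "length r = length p"
    unfolding r_def using assms(2,3,5) by simp
  ultimately have "r \<in> shortest_paths V E u v"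
    using shortest_pathsD(2)[OF p] unfolding shortest_paths_def by auto
  then have "r = p" using assms(1) by blast
  moreover have "take (Suc (j - i)) (drop i r) = q"
    unfolding r_def using assms(2,3,5) by simp
  ultimately show ?thesis by simp
qed

lemma between_on_unique_shortest_path:
  assumes "shortest_paths V E u v = {p}" "i \<le> j" "j < length p"
    "reachable V E (p ! i) z" "reachable V E z (p ! j)" "between V E (p ! i) z (p ! j)"
  shows "\<exists>k. i \<le> k \<and> k \<le> j \<and> p ! k = z"
proof -
  obtain q1 where q1: "is_path V E q1 (p ! i) z" "length q1 = Suc (graph_dist V E (p ! i) z)"
    using graph_dist_attained[OF assms(4)] by blast
  obtain q2 where q2: "is_path V E q2 z (p ! j)" "length q2 = Suc (graph_dist V E z (p ! j))"
    using graph_dist_attained[OF assms(5)] by blast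
  have "p \<in> shortest_paths V E u v" using assms(1) by blast
  then have "graph_dist V E (p ! i) (p ! j) = j - i"
    using assms(2,3) by (rule graph_dist_shortest_path)
  then have "length (q1 @ tl q2) = Suc (j - i)"
    using assms(6) q1(2) q2(2) unfolding between_def by simp
  then have seg: "q1 @ tl q2 = take (Suc (j - i)) (drop i p)"
    using unique_shortest_path_segment[OF assms(1-3) is_path_append[OF q1(1) q2(1)]] by blast
  have "z \<in> set q1"
    using q1(1) unfolding is_path_def by auto
  then have "z \<in> set (take (Suc (j - i)) (drop i p))"
    unfolding seg[symmetric] by simp
  then obtain k where "k < Suc (j - i)" "p ! (i + k) = z"
    using assms(2,3) unfolding in_set_conv_nth by auto
  then show ?thesis
    using assms(2) by (intro exI[of _ "i + k"]) auto
qed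

definition interior_vertex :: "'a list \<Rightarrow> 'a \<Rightarrow> bool" where
  "interior_vertex p w \<longleftrightarrow> w \<in> set p \<and> w \<noteq> hd p \<and> w \<noteq> last p"

lemma interior_vertex_iff_nth:
  assumes "distinct p"
  shows "interior_vertex p w \<longleftrightarrow> (\<exists>k. 0 < k \<and> Suc k < length p \<and> p ! k = w)"
proof (cases "p = []")
  case False
  then have ends: "hd p = p ! 0" "last p = p ! (length p - 1)"
    by (simp_all add: hd_conv_nth last_conv_nth)
  have index: "p ! k = p ! 0 \<longleftrightarrow> k = 0" "p ! k = p ! (length p - 1) \<longleftrightarrow> k = length p - 1"
    if "k < length p" for k
    using nth_eq_iff_index_eq[OF assms that] False by simp_all
  show ?thesis
    unfolding interior_vertex_def ends in_set_conv_nth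
  proof (intro iffI; elim exE conjE)
    fix k assume "k < length p" "p ! k = w" "w \<noteq> p ! 0" "w \<noteq> p ! (length p - 1)"
    then show "\<exists>k. 0 < k \<and> Suc k < length p \<and> p ! k = w"
      using index[of k] by (intro exI[of _ k]) auto
  next
    fix k assume "0 < k" "Suc k < length p" "p ! k = w"
    then show "(\<exists>k < length p. p ! k = w) \<and> w \<noteq> p ! 0 \<and> w \<noteq> p ! (length p - 1)"
      using index[of k] by (auto intro: exI[of _ k])
  qed
qed (simp add: interior_vertex_def)

lemma not_between_off_path:
  assumes "sym E" "shortest_paths V E u v = {p}" "interior_vertex p x" "interior_vertex p y"
    "w \<in> set p" "reachable V E w z" "\<not> interior_vertex p z"
  shows "\<not> between V E x z y"
proof
  assume btw: "between V E x z y"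
  have p: "p \<in> shortest_paths V E u v" using assms(2) by blast
  have path: "is_path V E p u v" using shortest_pathsD(1)[OF p] .
  have dist: "distinct p" using shortest_path_distinct[OF p] .
  obtain i where i: "0 < i" "Suc i < length p" "p ! i = x"
    using assms(3) unfolding interior_vertex_iff_nth[OF dist] by blast
  obtain j where j: "0 < j" "Suc j < length p" "p ! j = y"
    using assms(4) unfolding interior_vertex_iff_nth[OF dist] by blast
  have reach_x: "reachable V E x z"
    using reachable_trans[OF reachable_on_path[OF assms(1) path _ assms(5)] assms(6)] i by auto
  have reach_y: "reachable V E y z"
    using reachable_trans[OF reachable_on_path[OF assms(1) path _ assms(5)] assms(6)] j by auto
  have "\<exists>k. 0 < k \<and> Suc k < length p \<and> p ! k = z"
  proof (cases "i \<le> j")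
    case True
    then obtain k where "i \<le> k" "k \<le> j" "p ! k = z"
      using between_on_unique_shortest_path[OF assms(2) True, of z] i j btw
        reach_x reachable_sym[OF assms(1) reach_y] by auto
    then show ?thesis using i j by (intro exI[of _ k]) auto
  next
    case False
    then obtain k where "j \<le> k" "k \<le> i" "p ! k = z"
      using between_on_unique_shortest_path[OF assms(2), of j i z] i j btw
        between_sym[OF assms(1)] reach_y reachable_sym[OF assms(1) reach_x] by auto
    then show ?thesis using i j by (intro exI[of _ k]) auto
  qed
  then show False
    using assms(7) unfolding interior_vertex_iff_nth[OF dist] by blast
qed

lemma int_opposite_sides:
  fixes a a' y z :: int
  assumes "a \<noteq> a'"
    "\<bar>a - y\<bar> + \<bar>y - a'\<bar> \<noteq> \<bar>a - a'\<bar>" "\<bar>z - y\<bar> + \<bar>y - a\<bar> \<noteq> \<bar>z - a\<bar>"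
    "\<bar>a - z\<bar> + \<bar>z - a'\<bar> \<noteq> \<bar>a - a'\<bar>" "\<bar>y - z\<bar> + \<bar>z - a\<bar> \<noteq> \<bar>y - a\<bar>"
  shows "\<bar>y - a\<bar> - \<bar>y - a'\<bar> = \<bar>z - a'\<bar> - \<bar>z - a\<bar>" "\<bar>y - a\<bar> \<noteq> \<bar>y - a'\<bar>"
  using assms by (simp_all add: abs_if split: if_splits)

lemma opposite_sides:
  assumes "sym E" "p \<in> shortest_paths V E u v"
    "a \<in> set p" "a' \<in> set p" "y \<in> set p" "z \<in> set p" "a \<noteq> a'"
    "\<not> between V E a y a'" "\<not> between V E z y a" "\<not> between V E a z a'" "\<not> between V E y z a"
  shows "int (graph_dist V E y a) - int (graph_dist V E y a') = int (graph_dist V E z a') - int (graph_dist V E z a)"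
    "graph_dist V E y a \<noteq> graph_dist V E y a'"
proof -
  obtain ka ka' ky kz where
    pos: "ka < length p" "ka' < length p" "ky < length p" "kz < length p"
    and at: "a = p ! ka" "a' = p ! ka'" "y = p ! ky" "z = p ! kz"
    using assms(3-6) by (metis in_set_conv_nth)
  note d = int_graph_dist_shortest_path[OF assms(1,2)]
  have nb: "int (graph_dist V E x m) + int (graph_dist V E m x') \<noteq> int (graph_dist V E x x')"
    if "\<not> between V E x m x'" for x m x'
    using that unfolding between_def by linarith
  have "int ka \<noteq> int ka'" using assms(7) at by auto
  then have "\<bar>int ky - int ka\<bar> - \<bar>int ky - int ka'\<bar> = \<bar>int kz - int ka'\<bar> - \<bar>int kz - int ka\<bar>"
    "\<bar>int ky - int ka\<bar> \<noteq> \<bar>int ky - int ka'\<bar>"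
    using int_opposite_sides[of "int ka" "int ka'" "int ky" "int kz"]
      nb[OF assms(8)] nb[OF assms(9)] nb[OF assms(10)] nb[OF assms(11)]
    unfolding at d[OF pos(1) pos(3)] d[OF pos(1) pos(4)] d[OF pos(3) pos(2)] d[OF pos(4) pos(2)]
      d[OF pos(1) pos(2)] d[OF pos(4) pos(3)] d[OF pos(3) pos(1)] d[OF pos(4) pos(1)]
      d[OF pos(3) pos(4)]
    by simp_all
  then show "int (graph_dist V E y a) - int (graph_dist V E y a') = int (graph_dist V E z a') - int (graph_dist V E z a)"
    "graph_dist V E y a \<noteq> graph_dist V E y a'"
    using d[OF pos(3) pos(1)] d[OF pos(3) pos(2)] d[OF pos(4) pos(2)] d[OF pos(4) pos(1)]
    unfolding at by (simp, metis)
qed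

lemma no_three_unique_paths_with_private_pairs:
  assumes sym: "sym E"
    and sp: "shortest_paths V E u1 v1 = {p1}" "shortest_paths V E u2 v2 = {p2}"
      "shortest_paths V E u3 v3 = {p3}"
    and "a \<noteq> a'"
    and a: "interior_vertex p1 a" "interior_vertex p2 a" "interior_vertex p3 a"
    and a': "interior_vertex p1 a'" "interior_vertex p2 a'" "interior_vertex p3 a'"
    and b: "interior_vertex p1 b" "interior_vertex p2 b" "\<not> interior_vertex p3 b"
    and c: "interior_vertex p1 c" "\<not> interior_vertex p2 c" "interior_vertex p3 c"
    and d: "\<not> interior_vertex p1 d" "interior_vertex p2 d" "interior_vertex p3 d"
  shows False
proof -
  have p: "p1 \<in> shortest_paths V E u1 v1" "p2 \<in> shortest_paths V E u2 v2"
    "p3 \<in> shortest_paths V E u3 v3"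
    using sp by blast+
  have on_path: "a \<in> set p1" "a' \<in> set p1" "b \<in> set p1" "c \<in> set p1"
    "a \<in> set p2" "a' \<in> set p2" "b \<in> set p2" "d \<in> set p2"
    "a \<in> set p3" "a' \<in> set p3" "c \<in> set p3" "d \<in> set p3"
    using a a' b c d unfolding interior_vertex_def by blast+
  have reach: "reachable V E a b" "reachable V E a c" "reachable V E a d"
    using reachable_on_path[OF sym shortest_pathsD(1)[OF p(1)] on_path(1)] on_path(3,4)
      reachable_on_path[OF sym shortest_pathsD(1)[OF p(2)] on_path(5) on_path(8)] by auto
  have off1: "\<not> between V E x d y" if "interior_vertex p1 x" "interior_vertex p1 y" for x y
    using not_between_off_path[OF sym sp(1) that on_path(1) reach(3) d(1)] .
  have off2: "\<not> between V E x c y" if "interior_vertex p2 x" "interior_vertex p2 y" for x y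
    using not_between_off_path[OF sym sp(2) that on_path(5) reach(2) c(2)] .
  have off3: "\<not> between V E x b y" if "interior_vertex p3 x" "interior_vertex p3 y" for x y
    using not_between_off_path[OF sym sp(3) that on_path(9) reach(1) b(3)] .
  have "int (graph_dist V E b a) - int (graph_dist V E b a') = int (graph_dist V E c a') - int (graph_dist V E c a)"
    using opposite_sides(1)[OF sym p(1) on_path(1-4) \<open>a \<noteq> a'\<close>
        off3[OF a(3) a'(3)] off3[OF c(3) a(3)] off2[OF a(2) a'(2)] off2[OF b(2) a(2)]] .
  moreover have "int (graph_dist V E b a) - int (graph_dist V E b a') = int (graph_dist V E d a') - int (graph_dist V E d a)"
    using opposite_sides(1)[OF sym p(2) on_path(5-8) \<open>a \<noteq> a'\<close>
        off3[OF a(3) a'(3)] off3[OF d(3) a(3)] off1[OF a(1) a'(1)] off1[OF b(1) a(1)]] .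
  moreover have "int (graph_dist V E c a) - int (graph_dist V E c a') = int (graph_dist V E d a') - int (graph_dist V E d a)"
    and "graph_dist V E c a \<noteq> graph_dist V E c a'"
    using opposite_sides[OF sym p(3) on_path(9-12) \<open>a \<noteq> a'\<close>
        off2[OF a(2) a'(2)] off2[OF d(2) a(2)] off1[OF a(1) a'(1)] off1[OF c(1) a(1)]] by auto
  ultimately show False by linarith
qed

section \<open>The shattering argument\<close>

lemma fw_unique_shortest_path:
  assumes "shortest_paths V E u v = {p}"
  shows "fw V E w u v = (if interior_vertex p w then 1 else 0)"
proof -
  have "p \<in> shortest_paths V E u v"
    using assms by simp
  then have "is_path V E p u v"
    by (rule shortest_pathsD(1))
  then have ends: "hd p = u" "last p = v"
    unfolding is_path_def by auto
  have "{q \<in> {p}. w \<in> set q \<and> w \<noteq> u \<and> w \<noteq> v} = (if interior_vertex p w then {p} else {})"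
    unfolding interior_vertex_def ends by auto
  then have "sigma_via V E u v w = (if interior_vertex p w then 1 else 0)"
    unfolding sigma_via_def assms by simp
  then show ?thesis
    unfolding fw_def sigma_def assms by simp
qed

lemma Rw_unique_shortest_path:
  assumes "b \<in> Dset V \<times> {0..1}" "sigma V E (fst (fst b)) (snd (fst b)) = 1" "b \<notin> Rw V E w0"
  shows "\<exists>p. shortest_paths V E (fst (fst b)) (snd (fst b)) = {p} \<and>
    (\<forall>w. b \<in> Rw V E w \<longleftrightarrow> interior_vertex p w)"
proof -
  obtain u v x where b: "b = ((u, v), x)" by (metis prod.collapse)
  obtain p where p: "shortest_paths V E u v = {p}"
    using assms(2) b unfolding sigma_def by (auto simp: card_1_singleton_iff)
  note f = fw_unique_shortest_path[OF p]
  \<comment> \<open>a weight \<open>x = 0\<close> would put \<open>b\<close> in every range, in particular in that of \<open>w0\<close>\<close>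
  have "0 < x"
    using assms(1,3) f[of w0] unfolding b Rw_def by (auto split: if_splits)
  then have "b \<in> Rw V E w \<longleftrightarrow> interior_vertex p w" for w
    using assms(1) f[of w] unfolding b Rw_def by auto
  then show ?thesis
    using p b by auto
qed

lemma not_shattered_with_three_unique_paths:
  assumes sym: "sym E"
    and B: "B \<subseteq> Dset V \<times> {0..1}" "card B = 4" "shattered (Rw V E ` V) B"
    and bs: "b1 \<in> B" "b2 \<in> B" "b3 \<in> B" "b1 \<noteq> b2" "b1 \<noteq> b3" "b2 \<noteq> b3"
    and sigma: "sigma V E (fst (fst b1)) (snd (fst b1)) = 1"
      "sigma V E (fst (fst b2)) (snd (fst b2)) = 1" "sigma V E (fst (fst b3)) (snd (fst b3)) = 1"
  shows False
proof -
  have cut: "\<exists>w. Rw V E w \<inter> B = T" if "T \<subseteq> B" for T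
  proof -
    have "T \<in> (\<lambda>R. R \<inter> B) ` Rw V E ` V"
      using B(3) that unfolding shattered_def by simp
    then show ?thesis by blast
  qed
  have "card {b1, b2, b3} = 3"
    using bs by simp
  then have "\<not> B \<subseteq> {b1, b2, b3}"
    using B(2) card_mono[of "{b1, b2, b3}" B] by auto
  then obtain b4 where b4: "b4 \<in> B" "b4 \<notin> {b1, b2, b3}"
    by blast
  obtain w0 where "Rw V E w0 \<inter> B = {}"
    using cut by blast
  then have unique: "\<exists>p. shortest_paths V E (fst (fst b)) (snd (fst b)) = {p} \<and>
      (\<forall>w. b \<in> Rw V E w \<longleftrightarrow> interior_vertex p w)" if "b \<in> {b1, b2, b3}" for b
    using Rw_unique_shortest_path[of b V E w0] that B(1) bs sigma by blast
  obtain p1 p2 p3 where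
    p: "shortest_paths V E (fst (fst b1)) (snd (fst b1)) = {p1}"
      "shortest_paths V E (fst (fst b2)) (snd (fst b2)) = {p2}"
      "shortest_paths V E (fst (fst b3)) (snd (fst b3)) = {p3}"
    and range: "\<And>w. b1 \<in> Rw V E w \<longleftrightarrow> interior_vertex p1 w" "\<And>w. b2 \<in> Rw V E w \<longleftrightarrow> interior_vertex p2 w"
      "\<And>w. b3 \<in> Rw V E w \<longleftrightarrow> interior_vertex p3 w"
    using unique[of b1] unique[of b2] unique[of b3] by auto
  have in_range: "x \<in> Rw V E w \<longleftrightarrow> x \<in> T" if "Rw V E w \<inter> B = T" "x \<in> B" for x w T
    using that by blast
  obtain a a' b c d where ranges:
    "Rw V E a \<inter> B = {b1, b2, b3}" "Rw V E a' \<inter> B = B"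
    "Rw V E b \<inter> B = {b1, b2}" "Rw V E c \<inter> B = {b1, b3}" "Rw V E d \<inter> B = {b2, b3}"
    using cut[of "{b1, b2, b3}"] cut[of B] cut[of "{b1, b2}"] cut[of "{b1, b3}"] cut[of "{b2, b3}"]
      bs by auto
  have "a \<noteq> a'"
    using ranges(1,2) b4 by blast
  then show False
    by (rule no_three_unique_paths_with_private_pairs[OF sym p, where b = b and c = c and d = d])
      (simp_all flip: range add: in_range[OF ranges(1)] in_range[OF ranges(2)]
        in_range[OF ranges(3)] in_range[OF ranges(4)] in_range[OF ranges(5)] bs bs(4-6)[symmetric])
qed

theorem lemma3:
  fixes V :: "'a set" and E :: "('a \<times> 'a) set"
  assumes "ugraph V E"
  shows "\<not> (\<exists>B :: (('a \<times> 'a) \<times> real) set.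
            B \<subseteq> Dset V \<times> {0..1} \<and> card B = 4 \<and>
            shattered (Rw V E ` V) B \<and>
            (\<exists>b1 b2 b3. b1 \<in> B \<and> b2 \<in> B \<and> b3 \<in> B \<and>
               b1 \<noteq> b2 \<and> b1 \<noteq> b3 \<and> b2 \<noteq> b3 \<and>
               sigma V E (fst (fst b1)) (snd (fst b1)) = 1 \<and>
               sigma V E (fst (fst b2)) (snd (fst b2)) = 1 \<and>
               sigma V E (fst (fst b3)) (snd (fst b3)) = 1))"
proof -
  have "sym E"
    using assms unfolding ugraph_def by blast
  then show ?thesis
    using not_shattered_with_three_unique_paths by blast
qed

end
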